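(* Suppose that the integral quadruple $(a,b,c,d)$ with $d>c>b>a\ge2$ satisfies: (1) $a,b,c,d$ are pairwise coprime; (2) $\frac{1}{a}+\frac{1}{b}+\frac{1}{c}+\frac{1}{d}=1+\frac{1}{abcd}$. Then $(a,b,c,d)$ is either $(2,3,7,41)$ or $(2,3,11,13)$. *)

theory Defs
  imports Complex_Main
begin

end

theory Submission
  imports Defs
begin

(* The equation forces 1/a + 1/b + 1/c + 1/d > 1. Since 1/3 + 1/4 + 1/5 + 1/6 < 1 this gives a = 2;
   then b and c are odd, and 1/2 + 1/5 + 1/7 + 1/8 < 1 gives b = 3. Clearing denominators in
   1/2 + 1/3 + 1/c + 1/d = 1 + 1/(6cd) yields (c - 6)(d - 6) = 35, whose only solutions with
   3 < c < d are (7, 41) and (11, 13). *)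

lemma reciprocal_sum_le:
  fixes a b c d p q r s :: int
  assumes "0 < p" "p \<le> a" "0 < q" "q \<le> b" "0 < r" "r \<le> c" "0 < s" "s \<le> d"
  shows "1 / of_int a + 1 / of_int b + 1 / of_int c + 1 / of_int d
         \<le> (1 / of_int p + 1 / of_int q + 1 / of_int r + 1 / of_int s :: 'a :: linordered_field)"
  using assms by (intro add_mono; simp add: frac_le)+

lemma smallest_eq_two_if_reciprocal_sum_gt_one:
  fixes a b c d :: int
  assumes "2 \<le> a" "a < b" "b < c" "c < d"
    and "1 < (1 / of_int a + 1 / of_int b + 1 / of_int c + 1 / of_int d :: 'a :: linordered_field)"
  shows "a = 2"
proof (rule ccontr)
  assume "a \<noteq> 2"
  with assms(1-4) have "(1 / of_int a + 1 / of_int b + 1 / of_int c + 1 / of_int d :: 'a)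
      \<le> 1 / 3 + 1 / 4 + 1 / 5 + 1 / 6"
    using reciprocal_sum_le[of 3 a 4 b 5 c 6 d] by simp
  with assms(5) show False by simp
qed

lemma second_eq_three_if_reciprocal_sum_gt_one:
  fixes b c d :: int
  assumes "2 < b" "b < c" "c < d" "odd b" "odd c"
    and "1 < (1 / 2 + 1 / of_int b + 1 / of_int c + 1 / of_int d :: 'a :: linordered_field)"
  shows "b = 3"
proof (rule ccontr)
  assume "b \<noteq> 3"
  with assms(1-5) have "5 \<le> b" "7 \<le> c" by presburger+
  with assms(3) have "(1 / 2 + 1 / of_int b + 1 / of_int c + 1 / of_int d :: 'a)
      \<le> 1 / 2 + 1 / 5 + 1 / 7 + 1 / 8"
    using reciprocal_sum_le[of 2 2 5 b 7 c 8 d] by simp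
  with assms(6) show False by simp
qed

lemma reciprocal_sum_2_3_eq_iff:
  fixes c d :: int
  assumes "c \<noteq> 0" "d \<noteq> 0"
  shows "(1 / 2 + 1 / 3 + 1 / of_int c + 1 / of_int d :: 'a :: field_char_0)
           = 1 + 1 / of_int (2 * 3 * c * d)
         \<longleftrightarrow> (c - 6) * (d - 6) = 35"
proof -
  have "(1 / 2 + 1 / 3 + 1 / of_int c + 1 / of_int d :: 'a) = 1 + 1 / of_int (2 * 3 * c * d)
        \<longleftrightarrow> (of_int (5 * c * d + 6 * d + 6 * c) :: 'a) = of_int (6 * c * d + 1)"
    using assms by (simp add: field_simps)
  also have "\<dots> \<longleftrightarrow> (c - 6) * (d - 6) = 35"
    unfolding of_int_eq_iff by algebra
  finally show ?thesis .
qed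

lemma shifted_product_eq_35:
  fixes c d :: int
  assumes "3 < c" "c < d" "(c - 6) * (d - 6) = 35"
  shows "(c, d) = (7, 41) \<or> (c, d) = (11, 13)"
proof -
  have "c < 12"
  proof (rule ccontr)
    assume "\<not> c < 12"
    with assms(2) have "6 * 7 \<le> (c - 6) * (d - 6)" by (intro mult_mono) auto
    with assms(3) show False by simp
  qed
  with assms(1) have "c \<in> {4..11}" by simp
  then consider "c = 4" | "c = 5" | "c = 6" | "c = 7" | "c = 8" | "c = 9" | "c = 10" | "c = 11"
    by force
  then show ?thesis
    using assms(2,3) by (cases; simp; presburger)
qed

theorem proposition3p1:
  fixes a b c d :: int
  assumes "2 \<le> a" and "a < b" and "b < c" and "c < d"
    and "coprime a b" and "coprime a c" and "coprime a d"
    and "coprime b c" and "coprime b d" and "coprime c d"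
    and "1 / of_int a + 1 / of_int b + 1 / of_int c + 1 / of_int d
         = (1 :: rat) + 1 / of_int (a * b * c * d)"
  shows "(a, b, c, d) = (2, 3, 7, 41) \<or> (a, b, c, d) = (2, 3, 11, 13)"
proof -
  note order = assms(1-4) and eq = assms(11)
  have "0 < (1 / of_int (a * b * c * d) :: rat)"
    using order by simp
  with eq have gt_one: "1 < (1 / of_int a + 1 / of_int b + 1 / of_int c + 1 / of_int d :: rat)"
    by linarith
  with order have a: "a = 2"
    by (rule smallest_eq_two_if_reciprocal_sum_gt_one)
  with assms(5,6) have "odd b" "odd c" by simp_all
  with order gt_one a have b: "b = 3"
    using second_eq_three_if_reciprocal_sum_gt_one[of b c d] by simp
  from eq order have "(c - 6) * (d - 6) = 35"
    unfolding a b by (subst reciprocal_sum_2_3_eq_iff[symmetric]) simp_all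
  with order b have "(c, d) = (7, 41) \<or> (c, d) = (11, 13)"
    by (intro shifted_product_eq_35) simp_all
  with a b show ?thesis by auto
qed

end
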